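(* Let $\mathcal{V}$ be a convex open subset of a Banach space $\mathcal{Y}$, $f:\mathcal{V}\to\mathbb{R}$ a function, and $F:[0,+\infty)\to[0,+\infty)$ a non-decreasing locally Lipschitz function. Fix $x_0\in\mathcal{V}$ and let $s:[0,R)\to\mathbb{R}$, with $R<\infty$, be a solution of $s'=F(s)$, $s(0)=|f(x_0)|$. If $|D|f(x)\le F(|f(x)|)$ for all $x\in\mathcal{V}$, then $|f(x)|\le s(\|x-x_0\|)$ for all $x\in\mathcal{V}\cap B(x_0,R)$.
   Context: For $f:\mathcal{Y}\supset\mathcal{V}\to\mathbb{R}$, the metric derivative (pointwise Lipschitz constant) is $|D|f(x):=\limsup_{r\to0}\sup_{y\in B(x,r)}\frac{|f(x)-f(y)|}{\|x-y\|}$. *)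

theory Defs
  imports "HOL-Analysis.Analysis"
begin

text \<open>Metric derivative (pointwise Lipschitz constant) of f : V -> R at x,
  limsup_{r->0+} sup_{y in B(x,r) within V} |f x - f y| / norm (x - y), valued in the extended reals.
  (The term y = x contributes 0 by the convention x / 0 = 0.)\<close>
definition metric_deriv :: "'a::real_normed_vector set \<Rightarrow> ('a \<Rightarrow> real) \<Rightarrow> 'a \<Rightarrow> ereal" where
  "metric_deriv V f x =
     Limsup (at_right 0) (\<lambda>r. SUP y\<in>ball x r \<inter> V. ereal (\<bar>f x - f y\<bar> / norm (x - y)))"

end

theory Submission
  imports Defs
begin

text \<open>Along the unit-speed segment from \<open>x0\<close> to \<open>x\<close>, \<open>\<phi> t = \<bar>f (x0 + t u)\<bar>\<close> is a
  continuous function whose left Dini derivative is at most \<open>F (\<phi> t)\<close>, so it suffices to compare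
  such a subsolution with the solution \<open>s\<close> of \<open>s' = F s\<close>. If \<open>\<phi>\<close> overtook \<open>s\<close>, let \<open>a\<close> be
  the last contact point before that. Near \<open>a\<close> both functions stay where \<open>F\<close> is \<open>L\<close>-Lipschitz,
  so \<open>w = \<phi> - s\<close> has left Dini derivative at most \<open>L w\<close> while positive, and a maximiser of
  \<open>w t / (1 + 4 L (t - a))\<close> on a short interval contradicts this.\<close>

lemma metric_deriv_le_imp_local_bound:
  fixes f :: "'a::real_normed_vector \<Rightarrow> real"
  assumes "metric_deriv V f x \<le> ereal c" "\<eta> > 0"
  shows "\<exists>r>0. \<forall>y\<in>ball x r \<inter> V. \<bar>f x - f y\<bar> \<le> (c + \<eta>) * norm (x - y)"
proof -
  have "Limsup (at_right 0) (\<lambda>r. SUP y\<in>ball x r \<inter> V. ereal (\<bar>f x - f y\<bar> / norm (x - y)))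
      < ereal (c + \<eta>)"
    using assms unfolding metric_deriv_def by (simp add: le_less_trans)
  then have "\<forall>\<^sub>F r in at_right 0. (SUP y\<in>ball x r \<inter> V. ereal (\<bar>f x - f y\<bar> / norm (x - y)))
      < ereal (c + \<eta>)"
    by (rule Limsup_lessD)
  then obtain b where "b > 0" and b: "\<forall>r>0. r < b \<longrightarrow>
      (SUP y\<in>ball x r \<inter> V. ereal (\<bar>f x - f y\<bar> / norm (x - y))) < ereal (c + \<eta>)"
    by (auto simp: eventually_at_right_field)
  define r where "r = b / 2"
  have r: "r > 0" using \<open>b > 0\<close> by (simp add: r_def)
  have sup_less: "(SUP y\<in>ball x r \<inter> V. ereal (\<bar>f x - f y\<bar> / norm (x - y))) < ereal (c + \<eta>)"
    using b \<open>b > 0\<close> by (simp add: r_def)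
  have "\<bar>f x - f y\<bar> \<le> (c + \<eta>) * norm (x - y)" if y: "y \<in> ball x r \<inter> V" for y
  proof (cases "y = x")
    case False
    have "ereal (\<bar>f x - f y\<bar> / norm (x - y)) < ereal (c + \<eta>)"
      using SUP_upper[OF y] sup_less by (rule le_less_trans)
    with False show ?thesis by (simp add: divide_less_eq less_imp_le)
  qed simp
  with r show ?thesis by blast
qed

lemma continuous_on_if_pointwise_lipschitz:
  fixes g :: "'a::metric_space \<Rightarrow> 'b::metric_space"
  assumes "\<forall>x\<in>S. \<exists>C r. r > 0 \<and> (\<forall>y\<in>S. dist y x < r \<longrightarrow> dist (g y) (g x) \<le> C * dist y x)"
  shows "continuous_on S g"
  unfolding continuous_on_iff
proof (intro ballI allI impI)
  fix x e assume "x \<in> S" "(0::real) < e"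
  then obtain C r where r: "r > 0" and C: "\<forall>y\<in>S. dist y x < r \<longrightarrow> dist (g y) (g x) \<le> C * dist y x"
    using assms by blast
  define K where "K = \<bar>C\<bar> + 1"
  have K: "K > 0" by (simp add: K_def add_nonneg_pos)
  show "\<exists>\<delta>>0. \<forall>y\<in>S. dist y x < \<delta> \<longrightarrow> dist (g y) (g x) < e"
  proof (intro exI[of _ "min r (e / K)"] conjI ballI impI)
    fix y assume "y \<in> S" "dist y x < min r (e / K)"
    then have "dist (g y) (g x) \<le> C * dist y x" using C by simp
    also have "\<dots> \<le> K * dist y x" by (intro mult_right_mono) (auto simp: K_def)
    also have "\<dots> < K * (e / K)"
      using \<open>dist y x < _\<close> K by (intro mult_strict_left_mono) auto
    finally show "dist (g y) (g x) < e" using K by simp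
  qed (use r K \<open>0 < e\<close> in auto)
qed

lemma convex_unit_speed_segment:
  fixes x0 x :: "'a::real_normed_vector"
  assumes "convex V" "x0 \<in> V" "x \<in> V" "x \<noteq> x0"
  obtains p where "p 0 = x0" "p (norm (x - x0)) = x" "p ` {0..norm (x - x0)} \<subseteq> V"
    "\<forall>t t'. norm (p t - p t') = \<bar>t - t'\<bar>"
proof
  define d where "d = norm (x - x0)"
  have d: "d > 0" using assms(4) by (simp add: d_def)
  let ?p = "\<lambda>t. x0 + (t / d) *\<^sub>R (x - x0)"
  show "?p 0 = x0" "?p (norm (x - x0)) = x" using d by (simp_all add: d_def)
  have "?p t \<in> V" if "t \<in> {0..d}" for t
  proof -
    have "(1 - t / d) *\<^sub>R x0 + (t / d) *\<^sub>R x \<in> V"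
      using that d by (intro convexD_alt[OF assms(1-3)]) auto
    then show ?thesis by (simp add: algebra_simps)
  qed
  then show "?p ` {0..norm (x - x0)} \<subseteq> V" by (auto simp: d_def)
  show "\<forall>t t'. norm (?p t - ?p t') = \<bar>t - t'\<bar>"
  proof (intro allI)
    fix t t'
    have "?p t - ?p t' = ((t - t') / d) *\<^sub>R (x - x0)"
      by (simp add: algebra_simps diff_divide_distrib)
    then show "norm (?p t - ?p t') = \<bar>t - t'\<bar>" using d by (simp add: d_def)
  qed
qed

lemma metric_deriv_bound_along_isometry:
  fixes f :: "'a::real_normed_vector \<Rightarrow> real" and p :: "real \<Rightarrow> 'a"
  assumes bound: "\<forall>x\<in>V. metric_deriv V f x \<le> ereal (G x)"
    and "p ` T \<subseteq> V" and isometry: "\<forall>t t'. norm (p t - p t') = \<bar>t - t'\<bar>"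
  shows "\<forall>\<tau>\<in>T. \<forall>\<eta>>0. \<exists>r>0. \<forall>t\<in>T. \<bar>\<tau> - t\<bar> < r \<longrightarrow>
           \<bar>\<bar>f (p \<tau>)\<bar> - \<bar>f (p t)\<bar>\<bar> \<le> (G (p \<tau>) + \<eta>) * \<bar>\<tau> - t\<bar>"
proof (intro ballI allI impI)
  fix \<tau> \<eta> :: real assume "\<tau> \<in> T" "\<eta> > 0"
  then have "p \<tau> \<in> V" using assms(2) by blast
  then obtain r where "r > 0"
    and r: "\<forall>y\<in>ball (p \<tau>) r \<inter> V. \<bar>f (p \<tau>) - f y\<bar> \<le> (G (p \<tau>) + \<eta>) * norm (p \<tau> - y)"
    using metric_deriv_le_imp_local_bound bound \<open>\<eta> > 0\<close> by blast
  have "\<bar>\<bar>f (p \<tau>)\<bar> - \<bar>f (p t)\<bar>\<bar> \<le> (G (p \<tau>) + \<eta>) * \<bar>\<tau> - t\<bar>" if "t \<in> T" "\<bar>\<tau> - t\<bar> < r" for t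
  proof -
    have "p t \<in> ball (p \<tau>) r \<inter> V" using that assms(2) isometry by (auto simp: dist_norm)
    then have "\<bar>f (p \<tau>) - f (p t)\<bar> \<le> (G (p \<tau>) + \<eta>) * norm (p \<tau> - p t)" using r by blast
    then have "\<bar>f (p \<tau>) - f (p t)\<bar> \<le> (G (p \<tau>) + \<eta>) * \<bar>\<tau> - t\<bar>" using isometry by simp
    with abs_triangle_ineq3 show ?thesis by (rule order_trans)
  qed
  with \<open>r > 0\<close> show "\<exists>r>0. \<forall>t\<in>T. \<bar>\<tau> - t\<bar> < r \<longrightarrow>
      \<bar>\<bar>f (p \<tau>)\<bar> - \<bar>f (p t)\<bar>\<bar> \<le> (G (p \<tau>) + \<eta>) * \<bar>\<tau> - t\<bar>"
    by blast
qed

lemma last_zero_before_positive: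
  fixes w :: "real \<Rightarrow> real"
  assumes "continuous_on {a..b} w" "a \<le> b" "w a \<le> 0" "w b > 0"
  obtains c where "c \<in> {a..<b}" "w c = 0" "\<forall>t\<in>{c<..b}. w t > 0"
proof -
  define S where "S = {a..b} \<inter> w -` {..0}"
  have "closed S" unfolding S_def by (rule continuous_closed_preimage[OF assms(1)]) auto
  moreover have "bounded S" unfolding S_def by (rule bounded_subset[OF bounded_closed_interval]) auto
  ultimately have "compact S" by (simp add: compact_eq_bounded_closed)
  moreover have "a \<in> S" using assms(2,3) by (simp add: S_def)
  ultimately obtain c where "c \<in> S" and c_max: "\<forall>t\<in>S. t \<le> c"
    using compact_attains_sup by blast
  then have c: "a \<le> c" "c \<le> b" "w c \<le> 0" by (auto simp: S_def)
  have pos: "w t > 0" if "t \<in> {c<..b}" for t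
  proof (rule ccontr)
    assume "\<not> w t > 0"
    then have "t \<in> S" using that c(1) by (auto simp: S_def)
    then have "t \<le> c" using c_max by blast
    with that show False by simp
  qed
  have "continuous_on {c..b} w" using c(1) by (intro continuous_on_subset[OF assms(1)]) auto
  then obtain z where z: "c \<le> z" "z \<le> b" "w z = 0"
    using IVT'[of w c 0 b] c(2,3) assms(4) by auto
  have "w c = 0" using pos[of z] z c(3) by (cases "z = c") auto
  moreover have "c < b" using c assms(4) by (cases "c = b") auto
  ultimately show thesis using that c(1) pos by auto
qed

text \<open>On \<open>[a, a + 1/(4 L)]\<close> the weight \<open>1 + 4 L (t - a)\<close> lies in \<open>[1, 2]\<close>, so at a maximiser
  of \<open>w t / (1 + 4 L (t - a))\<close> the left slope of \<open>w\<close> is at least \<open>2 L w\<close>.\<close>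
lemma weighted_max_left_increment:
  fixes w :: "real \<Rightarrow> real"
  assumes "L > 0" "a \<le> t" "t < \<tau>" "\<tau> - a \<le> 1 / (4 * L)" "w \<tau> \<ge> 0"
    and max: "w t / (1 + 4 * L * (t - a)) \<le> w \<tau> / (1 + 4 * L * (\<tau> - a))"
  shows "2 * L * w \<tau> * (\<tau> - t) \<le> w \<tau> - w t"
proof -
  define D0 D where "D0 = 1 + 4 * L * (t - a)" and "D = 1 + 4 * L * (\<tau> - a)"
  have "D0 \<ge> 1" "D > 1" using assms(1-3) by (simp_all add: D0_def D_def)
  have "D \<le> 2" using assms(1,4) by (simp add: D_def field_simps)
  have "w t * D \<le> w \<tau> * D0"
    using max \<open>D0 \<ge> 1\<close> \<open>D > 1\<close> by (simp add: D0_def D_def divide_simps)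
  moreover have "w \<tau> * D - w \<tau> * D0 = 4 * L * w \<tau> * (\<tau> - t)"
    by (simp add: D0_def D_def algebra_simps)
  moreover have "(w \<tau> - w t) * D = w \<tau> * D - w t * D" by (simp add: left_diff_distrib)
  ultimately have incr: "4 * L * w \<tau> * (\<tau> - t) \<le> (w \<tau> - w t) * D" by linarith
  have "0 \<le> 4 * L * w \<tau> * (\<tau> - t)" using assms(1,3,5) by simp
  then have "0 \<le> (w \<tau> - w t) * D" using incr by linarith
  then have "0 \<le> w \<tau> - w t" using \<open>D > 1\<close> by (simp add: zero_le_mult_iff)
  from mult_left_mono[OF \<open>D \<le> 2\<close> this] have "(w \<tau> - w t) * D \<le> (w \<tau> - w t) * 2" .
  with incr show ?thesis by simp
qed

lemma positive_left_dini_bound_impossible: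
  fixes w :: "real \<Rightarrow> real"
  assumes "continuous_on {a..b} w" "a < b" "w a = 0" "L > 0"
    and pos: "\<forall>t\<in>{a<..b}. w t > 0"
    and dini: "\<forall>\<tau>\<in>{a<..b}. \<forall>\<eta>>0. \<exists>r>0. \<forall>t\<in>{a<..<\<tau>}.
                 \<tau> - t < r \<longrightarrow> w \<tau> - w t \<le> (L * \<bar>w \<tau>\<bar> + \<eta>) * (\<tau> - t)"
  shows False
proof -
  define b' where "b' = min b (a + 1 / (4 * L))"
  define h where "h t = w t / (1 + 4 * L * (t - a))" for t
  have "a < b'" "b' \<le> b" using assms(2,4) by (simp_all add: b'_def)
  have weight_pos: "1 + 4 * L * (t - a) > 0" if "a \<le> t" for t
    using assms(4) that by (simp add: add_pos_nonneg)
  have "continuous_on {a..b'} h"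
    unfolding h_def using \<open>b' \<le> b\<close> weight_pos
    by (intro continuous_intros continuous_on_subset[OF assms(1)]) (auto simp: less_imp_neq[symmetric])
  moreover have "{a..b'} \<noteq> {}" using \<open>a < b'\<close> by simp
  ultimately obtain \<tau> where \<tau>: "\<tau> \<in> {a..b'}" and \<tau>_max: "\<forall>t\<in>{a..b'}. h t \<le> h \<tau>"
    using continuous_attains_sup[OF compact_Icc] by blast
  have "0 < h b'" using pos \<open>a < b'\<close> \<open>b' \<le> b\<close> weight_pos[of b'] by (simp add: h_def)
  also have "\<dots> \<le> h \<tau>" using \<tau>_max \<open>a < b'\<close> by simp
  finally have "\<tau> \<noteq> a" using assms(3) by (auto simp: h_def)
  then have "\<tau> \<in> {a<..b}" "w \<tau> > 0" using \<tau> \<open>b' \<le> b\<close> pos by auto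
  then have "L * w \<tau> / 2 > 0" using assms(4) by simp
  then obtain r where "r > 0" and r: "\<forall>t\<in>{a<..<\<tau>}. \<tau> - t < r \<longrightarrow>
      w \<tau> - w t \<le> (L * \<bar>w \<tau>\<bar> + L * w \<tau> / 2) * (\<tau> - t)"
    using bspec[OF dini \<open>\<tau> \<in> {a<..b}\<close>, rule_format] by blast
  define t where "t = \<tau> - min r (\<tau> - a) / 2"
  have t: "a < t" "t < \<tau>" "\<tau> - t < r" using \<open>r > 0\<close> \<open>\<tau> \<in> {a<..b}\<close> by (auto simp: t_def min_def field_simps)
  have "2 * L * w \<tau> * (\<tau> - t) \<le> w \<tau> - w t"
  proof (rule weighted_max_left_increment[where a = a])
    show "w t / (1 + 4 * L * (t - a)) \<le> w \<tau> / (1 + 4 * L * (\<tau> - a))"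
      using \<tau>_max t \<tau> by (simp add: h_def)
  qed (use t \<tau> \<open>w \<tau> > 0\<close> assms(4) in \<open>auto simp: b'_def\<close>)
  also have "\<dots> \<le> (L * w \<tau> + L * w \<tau> / 2) * (\<tau> - t)" using r t \<open>w \<tau> > 0\<close> by auto
  finally show False using t(2) assms(4) \<open>w \<tau> > 0\<close> by (simp add: algebra_simps)
qed

lemma left_increment_of_difference:
  fixes \<phi> s F :: "real \<Rightarrow> real"
  assumes lip: "L-lipschitz_on N F" and "\<phi> \<tau> \<in> N" "s \<tau> \<in> N"
    and \<phi>: "\<forall>\<eta>>0. \<exists>r>0. \<forall>t\<in>T. \<bar>\<tau> - t\<bar> < r \<longrightarrow> \<bar>\<phi> \<tau> - \<phi> t\<bar> \<le> (F (\<phi> \<tau>) + \<eta>) * \<bar>\<tau> - t\<bar>"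
    and s: "(s has_real_derivative F (s \<tau>)) (at \<tau> within T)"
    and "\<eta> > 0"
  shows "\<exists>r>0. \<forall>t\<in>T. t < \<tau> \<longrightarrow> \<tau> - t < r \<longrightarrow>
           (\<phi> \<tau> - s \<tau>) - (\<phi> t - s t) \<le> (L * \<bar>\<phi> \<tau> - s \<tau>\<bar> + \<eta>) * (\<tau> - t)"
proof -
  have "\<eta> / 2 > 0" using \<open>\<eta> > 0\<close> by simp
  then obtain r1 where "r1 > 0" and r1: "\<forall>t\<in>T. \<bar>\<tau> - t\<bar> < r1 \<longrightarrow>
      \<bar>\<phi> \<tau> - \<phi> t\<bar> \<le> (F (\<phi> \<tau>) + \<eta> / 2) * \<bar>\<tau> - t\<bar>"
    using \<phi>[rule_format] by blast
  have "\<forall>e>0. \<exists>r>0. \<forall>t\<in>T. norm (t - \<tau>) < r \<longrightarrow>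
      norm (s t - s \<tau> - F (s \<tau>) * (t - \<tau>)) \<le> e * norm (t - \<tau>)"
    using s unfolding has_field_derivative_def has_derivative_within_alt by simp
  then obtain r2 where "r2 > 0" and r2: "\<forall>t\<in>T. norm (t - \<tau>) < r2 \<longrightarrow>
      norm (s t - s \<tau> - F (s \<tau>) * (t - \<tau>)) \<le> \<eta> / 2 * norm (t - \<tau>)"
    using \<open>\<eta> / 2 > 0\<close> by blast
  have F_diff: "F (\<phi> \<tau>) - F (s \<tau>) \<le> L * \<bar>\<phi> \<tau> - s \<tau>\<bar>"
    using lipschitz_onD[OF lip assms(2,3)] by (simp add: dist_real_def)
  have "(\<phi> \<tau> - s \<tau>) - (\<phi> t - s t) \<le> (L * \<bar>\<phi> \<tau> - s \<tau>\<bar> + \<eta>) * (\<tau> - t)"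
    if "t \<in> T" "t < \<tau>" "\<tau> - t < min r1 r2" for t
  proof -
    have "\<bar>\<tau> - t\<bar> = \<tau> - t" "\<bar>t - \<tau>\<bar> = \<tau> - t" using that(2) by simp_all
    then have \<phi>_incr: "\<phi> \<tau> - \<phi> t \<le> (F (\<phi> \<tau>) + \<eta> / 2) * (\<tau> - t)"
      and "\<bar>s t - s \<tau> - F (s \<tau>) * (t - \<tau>)\<bar> \<le> \<eta> / 2 * (\<tau> - t)"
      using r1 r2 that by (auto dest: abs_le_D1)
    then have s_incr: "(F (s \<tau>) - \<eta> / 2) * (\<tau> - t) \<le> s \<tau> - s t"
      unfolding abs_le_iff by (simp add: left_diff_distrib right_diff_distrib)
    have "(\<phi> \<tau> - s \<tau>) - (\<phi> t - s t) = (\<phi> \<tau> - \<phi> t) - (s \<tau> - s t)" by simp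
    also have "\<dots> \<le> (F (\<phi> \<tau>) + \<eta> / 2) * (\<tau> - t) - (F (s \<tau>) - \<eta> / 2) * (\<tau> - t)"
      using \<phi>_incr s_incr by linarith
    also have "\<dots> = (F (\<phi> \<tau>) - F (s \<tau>)) * (\<tau> - t) + \<eta> * (\<tau> - t)"
      by (simp add: algebra_simps)
    also have "\<dots> \<le> L * \<bar>\<phi> \<tau> - s \<tau>\<bar> * (\<tau> - t) + \<eta> * (\<tau> - t)"
      using F_diff that(2) by (simp add: mult_right_mono)
    also have "\<dots> = (L * \<bar>\<phi> \<tau> - s \<tau>\<bar> + \<eta>) * (\<tau> - t)" by (simp add: algebra_simps)
    finally show ?thesis .
  qed
  with \<open>r1 > 0\<close> \<open>r2 > 0\<close> show ?thesis by (intro exI[of _ "min r1 r2"]) auto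
qed

lemma difference_left_dini_bound_near_contact:
  fixes \<phi> s F :: "real \<Rightarrow> real"
  assumes F_loclip: "\<forall>t\<ge>0. \<exists>u>0. \<exists>L. L-lipschitz_on (cball t u \<inter> {0..}) F"
    and "a \<in> {0..<d}" "\<phi> a = s a"
    and \<phi>_nonneg: "\<forall>t\<in>{0..d}. \<phi> t \<ge> 0" and s_nonneg: "\<forall>t\<in>{0..d}. s t \<ge> 0"
    and \<phi>_cont: "continuous_on {0..d} \<phi>" and s_cont: "continuous_on {0..d} s"
    and \<phi>_bound: "\<forall>\<tau>\<in>{0..d}. \<forall>\<eta>>0. \<exists>r>0. \<forall>t\<in>{0..d}.
                   \<bar>\<tau> - t\<bar> < r \<longrightarrow> \<bar>\<phi> \<tau> - \<phi> t\<bar> \<le> (F (\<phi> \<tau>) + \<eta>) * \<bar>\<tau> - t\<bar>"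
    and s_ode: "\<forall>t\<in>{0..d}. (s has_real_derivative F (s t)) (at t within {0..d})"
  obtains L b where "L > 0" "a < b" "b \<le> d"
    "\<forall>\<tau>\<in>{a<..b}. \<forall>\<eta>>0. \<exists>r>0. \<forall>t\<in>{a<..<\<tau>}. \<tau> - t < r \<longrightarrow>
       (\<phi> \<tau> - s \<tau>) - (\<phi> t - s t) \<le> (L * \<bar>\<phi> \<tau> - s \<tau>\<bar> + \<eta>) * (\<tau> - t)"
proof -
  have "s a \<ge> 0" using s_nonneg assms(2) by simp
  then obtain u L0 where "u > 0" and L0: "L0-lipschitz_on (cball (s a) u \<inter> {0..}) F"
    using F_loclip by blast
  define N where "N = cball (s a) u \<inter> {0..}"
  have "L0 \<ge> 0" using L0 by (rule lipschitz_on_nonneg)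
  then have lip: "(L0 + 1)-lipschitz_on N F" "L0 + 1 > 0"
    using lipschitz_on_mono[OF L0, of N "L0 + 1"] by (simp_all add: N_def)
  have near: "\<exists>\<delta>>0. \<forall>t\<in>{0..d}. dist t a < \<delta> \<longrightarrow> dist (g t) (g a) < u"
    if "continuous_on {0..d} g" for g :: "real \<Rightarrow> real"
    using that \<open>u > 0\<close> assms(2) unfolding continuous_on_iff by (simp add: less_imp_le)
  obtain \<delta>1 \<delta>2 where "\<delta>1 > 0" "\<delta>2 > 0"
    and \<delta>1: "\<forall>t\<in>{0..d}. dist t a < \<delta>1 \<longrightarrow> dist (\<phi> t) (\<phi> a) < u"
    and \<delta>2: "\<forall>t\<in>{0..d}. dist t a < \<delta>2 \<longrightarrow> dist (s t) (s a) < u"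
    using near[OF \<phi>_cont] near[OF s_cont] by blast
  define b where "b = min d (a + min \<delta>1 \<delta>2 / 2)"
  have "a < b" "b \<le> d" using assms(2) \<open>\<delta>1 > 0\<close> \<open>\<delta>2 > 0\<close> by (auto simp: b_def)
  have "\<forall>\<tau>\<in>{a<..b}. \<forall>\<eta>>0. \<exists>r>0. \<forall>t\<in>{a<..<\<tau>}. \<tau> - t < r \<longrightarrow>
          (\<phi> \<tau> - s \<tau>) - (\<phi> t - s t) \<le> ((L0 + 1) * \<bar>\<phi> \<tau> - s \<tau>\<bar> + \<eta>) * (\<tau> - t)"
  proof (intro ballI allI impI)
    fix \<tau> \<eta> :: real assume "\<tau> \<in> {a<..b}" and "\<eta> > 0"
    then have \<tau>: "\<tau> \<in> {0..d}" "dist \<tau> a < \<delta>1" "dist \<tau> a < \<delta>2"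
      using assms(2) \<open>b \<le> d\<close> \<open>\<delta>1 > 0\<close> \<open>\<delta>2 > 0\<close> by (auto simp: b_def dist_real_def)
    then have "\<phi> \<tau> \<in> N" "s \<tau> \<in> N"
      using \<delta>1 \<delta>2 \<phi>_nonneg s_nonneg assms(3) by (auto simp: N_def dist_commute less_imp_le)
    from left_increment_of_difference[OF lip(1) this bspec[OF \<phi>_bound \<tau>(1)] bspec[OF s_ode \<tau>(1)]
        \<open>\<eta> > 0\<close>]
    obtain r where "r > 0" and r: "\<forall>t\<in>{0..d}. t < \<tau> \<longrightarrow> \<tau> - t < r \<longrightarrow>
        (\<phi> \<tau> - s \<tau>) - (\<phi> t - s t) \<le> ((L0 + 1) * \<bar>\<phi> \<tau> - s \<tau>\<bar> + \<eta>) * (\<tau> - t)"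
      by blast
    with assms(2) \<tau>(1) show "\<exists>r>0. \<forall>t\<in>{a<..<\<tau>}. \<tau> - t < r \<longrightarrow>
        (\<phi> \<tau> - s \<tau>) - (\<phi> t - s t) \<le> ((L0 + 1) * \<bar>\<phi> \<tau> - s \<tau>\<bar> + \<eta>) * (\<tau> - t)"
      by (intro exI[of _ r]) auto
  qed
  with lip(2) \<open>a < b\<close> \<open>b \<le> d\<close> that show thesis by blast
qed

lemma comparison_principle:
  fixes \<phi> s F :: "real \<Rightarrow> real"
  assumes F_loclip: "\<forall>t\<ge>0. \<exists>u>0. \<exists>L. L-lipschitz_on (cball t u \<inter> {0..}) F"
    and "0 \<le> d" and "\<phi> 0 \<le> s 0"
    and \<phi>_nonneg: "\<forall>t\<in>{0..d}. \<phi> t \<ge> 0" and s_nonneg: "\<forall>t\<in>{0..d}. s t \<ge> 0"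
    and \<phi>_bound: "\<forall>\<tau>\<in>{0..d}. \<forall>\<eta>>0. \<exists>r>0. \<forall>t\<in>{0..d}.
                   \<bar>\<tau> - t\<bar> < r \<longrightarrow> \<bar>\<phi> \<tau> - \<phi> t\<bar> \<le> (F (\<phi> \<tau>) + \<eta>) * \<bar>\<tau> - t\<bar>"
    and s_ode: "\<forall>t\<in>{0..d}. (s has_real_derivative F (s t)) (at t within {0..d})"
  shows "\<phi> d \<le> s d"
proof (rule ccontr)
  assume "\<not> \<phi> d \<le> s d"
  define w where "w t = \<phi> t - s t" for t
  have \<phi>_cont: "continuous_on {0..d} \<phi>"
  proof (rule continuous_on_if_pointwise_lipschitz, intro ballI)
    fix \<tau> assume "\<tau> \<in> {0..d}"
    then obtain r where "r > 0"
      and r: "\<forall>t\<in>{0..d}. \<bar>\<tau> - t\<bar> < r \<longrightarrow> \<bar>\<phi> \<tau> - \<phi> t\<bar> \<le> (F (\<phi> \<tau>) + 1) * \<bar>\<tau> - t\<bar>"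
      using bspec[OF \<phi>_bound \<open>\<tau> \<in> {0..d}\<close>, rule_format, of 1] by auto
    then show "\<exists>C r. r > 0 \<and> (\<forall>t\<in>{0..d}. dist t \<tau> < r \<longrightarrow> dist (\<phi> t) (\<phi> \<tau>) \<le> C * dist t \<tau>)"
      by (intro exI[of _ "F (\<phi> \<tau>) + 1"] exI[of _ r]) (simp add: dist_real_def abs_minus_commute)
  qed
  have s_cont: "continuous_on {0..d} s"
    unfolding continuous_on_eq_continuous_within using s_ode DERIV_continuous by blast
  have w_cont: "continuous_on {0..d} w" unfolding w_def by (intro continuous_intros \<phi>_cont s_cont)
  have "w 0 \<le> 0" "w d > 0" using assms(3) \<open>\<not> \<phi> d \<le> s d\<close> by (simp_all add: w_def)
  then obtain a where a: "a \<in> {0..<d}" "w a = 0" and w_pos: "\<forall>t\<in>{a<..d}. w t > 0"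
    using last_zero_before_positive[OF w_cont assms(2)] by blast
  obtain L b where "L > 0" "a < b" "b \<le> d" and dini: "\<forall>\<tau>\<in>{a<..b}. \<forall>\<eta>>0. \<exists>r>0. \<forall>t\<in>{a<..<\<tau>}.
      \<tau> - t < r \<longrightarrow> w \<tau> - w t \<le> (L * \<bar>w \<tau>\<bar> + \<eta>) * (\<tau> - t)"
    using difference_left_dini_bound_near_contact[OF F_loclip a(1) _ \<phi>_nonneg s_nonneg \<phi>_cont s_cont
        \<phi>_bound s_ode] a(2) unfolding w_def by auto
  have "continuous_on {a..b} w"
    using a(1) \<open>b \<le> d\<close> by (intro continuous_on_subset[OF w_cont]) auto
  moreover have "\<forall>t\<in>{a<..b}. w t > 0" using w_pos \<open>b \<le> d\<close> by simp
  ultimately show False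
    by (rule positive_left_dini_bound_impossible[OF _ \<open>a < b\<close> a(2) \<open>L > 0\<close> _ dini])
qed

theorem proposition3p1:
  fixes V :: "'a::banach set" and f :: "'a \<Rightarrow> real" and F :: "real \<Rightarrow> real"
    and s :: "real \<Rightarrow> real" and R :: real and x0 :: 'a
  assumes "convex V" and "open V"
    and F_nonneg: "\<forall>t\<ge>0. F t \<ge> 0"
    and F_mono: "mono_on {0..} F"
    and F_loclip: "\<forall>t\<ge>0. \<exists>u>0. \<exists>L. L-lipschitz_on (cball t u \<inter> {0..}) F"
    and "x0 \<in> V"
    and "0 < R"
    and s_nonneg: "\<forall>t\<in>{0..<R}. s t \<ge> 0"
    and s_ode: "\<forall>t\<in>{0..<R}. (s has_real_derivative F (s t)) (at t within {0..<R})"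
    and s_init: "s 0 = \<bar>f x0\<bar>"
    and bound: "\<forall>x\<in>V. metric_deriv V f x \<le> ereal (F \<bar>f x\<bar>)"
  shows "\<forall>x\<in>V \<inter> ball x0 R. \<bar>f x\<bar> \<le> s (norm (x - x0))"
proof (intro ballI)
  fix x assume x: "x \<in> V \<inter> ball x0 R"
  show "\<bar>f x\<bar> \<le> s (norm (x - x0))"
  proof (cases "x = x0")
    case False
    define d where "d = norm (x - x0)"
    have "d < R" using x by (simp add: d_def dist_norm norm_minus_commute)
    obtain p where p: "p 0 = x0" "p d = x" "p ` {0..d} \<subseteq> V"
      and isometry: "\<forall>t t'. norm (p t - p t') = \<bar>t - t'\<bar>"
      using convex_unit_speed_segment[OF \<open>convex V\<close> \<open>x0 \<in> V\<close> _ False] x unfolding d_def by blast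
    have s_ode_d: "\<forall>t\<in>{0..d}. (s has_real_derivative F (s t)) (at t within {0..d})"
      using s_ode \<open>d < R\<close> by (auto intro: has_field_derivative_subset[where s = "{0..<R}"])
    have "\<bar>f (p d)\<bar> \<le> s d"
    proof (rule comparison_principle[where \<phi> = "\<lambda>t. \<bar>f (p t)\<bar>", OF F_loclip _ _ _ _ _ s_ode_d])
      show "\<forall>\<tau>\<in>{0..d}. \<forall>\<eta>>0. \<exists>r>0. \<forall>t\<in>{0..d}. \<bar>\<tau> - t\<bar> < r \<longrightarrow>
          \<bar>\<bar>f (p \<tau>)\<bar> - \<bar>f (p t)\<bar>\<bar> \<le> (F \<bar>f (p \<tau>)\<bar> + \<eta>) * \<bar>\<tau> - t\<bar>"
        using metric_deriv_bound_along_isometry[where G = "\<lambda>x. F \<bar>f x\<bar>", OF bound p(3) isometry] .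
    qed (use s_nonneg s_init p(1) \<open>d < R\<close> in \<open>auto simp: d_def\<close>)
    with p(2) show ?thesis by (simp add: d_def)
  qed (simp add: s_init)
qed

end
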